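(* Let $p,q\ge 0$ with $p+q=3$. Equip $\mathcal{G}(p,q)$ with the bilinear product $$x\bullet y = x_+y_+ + \widetilde{y_-}\,x_- + y_-x_+ + x_-\widetilde{y_+},$$ and define $N:\mathcal{G}(p,q)\to\mathbb{R}$ by $N(x)=\langle x\bullet x^*\rangle_0$. (In fact $x\bullet x^*$ is itself a real scalar, so $x\bullet x^* = N(x)\,1$.) Then the following hold. 1. $1$ is a two-sided unit for $\bullet$. 2. $N$ is a nondegenerate real quadratic form on the 8-dimensional space $\mathcal{G}(p,q)$. 3. $N(x\bullet y)=N(x)N(y)$ for all $x,y\in\mathcal{G}(p,q)$. Consequently $(\mathcal{G}(p,q),\bullet,N)$ is a Hurwitz algebra, and hence it is isomorphic either to the octonions $\mathbb{O}$ or to the split-octonions $\mathbb{O}_s$.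
   Context: Let $p,q\ge0$ with $p+q=3$. $\mathcal{G}(p,q)$ denotes the real Clifford (geometric) algebra of $\mathbb{R}^3$ with a nondegenerate quadratic form of signature $(p,q)$. It is the associative unital real algebra generated by an orthonormal basis $e_1,e_2,e_3$ subject to $e_i^2=\lambda_i$ and $e_ie_j=-e_je_i$ for $i\ne j$. Here $\lambda_i\in\{\pm1\}$, and exactly $p$ of the $\lambda_i$ equal $+1$. The algebra is 8-dimensional with basis $1,e_1,e_2,e_3,e_1e_2,e_2e_3,e_1e_3,e_1e_2e_3$. Juxtaposition denotes the (associative) geometric product. $\langle x\rangle_k$ denotes the grade-$k$ part of $x$. We write $x_+=\langle x\rangle_0+\langle x\rangle_2$ (even part) and $x_-=\langle x\rangle_1+\langle x\rangle_3$ (odd part). Reversion $x\mapsto x^\dagger$ is the linear anti-automorphism fixing vectors; it multiplies grade $k$ by $(-1)^{k(k-1)/2}$. Inversion is $\bar x=x_+-x_-$. Clifford conjugation is $\tilde x=(\bar x)^\dagger$; it multiplies grades $0,1,2,3$ by $+1,-1,-1,+1$ respectively. Full grade inversion is $x^*=2\langle x\rangle_0-x$, which equals $x_+^\dagger - x_-$. A Hurwitz algebra is a real algebra with a two-sided unit carrying a nondegenerate quadratic form $n$ satisfying $n(xy)=n(x)n(y)$ for all $x,y$. By Hurwitz's theorem, the 8-dimensional ones are exactly the octonions $\mathbb{O}$ and the split-octonions $\mathbb{O}_s$, up to isomorphism. *)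

theory Defs
  imports "HOL-Analysis.Analysis"
begin

text \<open>The real Clifford algebra G(p,q) of R^3.  A basis blade e_1^a e_2^b e_3^c is indexed
  by (a,b,c) :: bool \<times> bool \<times> bool; a multivector is a real vector indexed by blades.
  The signature is given by lam :: nat \<Rightarrow> real with e_i^2 = lam i (i = 1,2,3).\<close>

type_synonym blade = "bool \<times> bool \<times> bool"
type_synonym mv = "real ^ blade"

definition grade :: "blade \<Rightarrow> nat" where
  "grade A = (case A of (a, b, c) \<Rightarrow> of_bool a + of_bool b + of_bool c)"

text \<open>e_A e_B = blade_sign A B * blade_lam lam A B * e_(A xor B)\<close>
definition blade_sign :: "blade \<Rightarrow> blade \<Rightarrow> real" where
  "blade_sign A B = (case A of (a1, a2, a3) \<Rightarrow> case B of (b1, b2, b3) \<Rightarrow>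
     (-1) ^ (of_bool (a2 \<and> b1) + of_bool (a3 \<and> b1) + of_bool (a3 \<and> b2)))"

definition blade_lam :: "(nat \<Rightarrow> real) \<Rightarrow> blade \<Rightarrow> blade \<Rightarrow> real" where
  "blade_lam lam A B = (case A of (a1, a2, a3) \<Rightarrow> case B of (b1, b2, b3) \<Rightarrow>
     (if a1 \<and> b1 then lam 1 else 1) * (if a2 \<and> b2 then lam 2 else 1) *
     (if a3 \<and> b3 then lam 3 else 1))"

definition blade_xor :: "blade \<Rightarrow> blade \<Rightarrow> blade" where
  "blade_xor A B = (case A of (a1, a2, a3) \<Rightarrow> case B of (b1, b2, b3) \<Rightarrow>
     (a1 \<noteq> b1, a2 \<noteq> b2, a3 \<noteq> b3))"

definition gprod :: "(nat \<Rightarrow> real) \<Rightarrow> mv \<Rightarrow> mv \<Rightarrow> mv" where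
  "gprod lam x y = (\<chi> C. \<Sum>A\<in>UNIV. \<Sum>B\<in>UNIV.
     (if blade_xor A B = C then blade_sign A B * blade_lam lam A B * (x $ A) * (y $ B) else 0))"

definition mv_one :: mv where
  "mv_one = (\<chi> A. if A = (False, False, False) then 1 else 0)"

definition grade_part :: "nat \<Rightarrow> mv \<Rightarrow> mv" where
  "grade_part k x = (\<chi> A. if grade A = k then x $ A else 0)"

definition scalar_part :: "mv \<Rightarrow> real" where
  "scalar_part x = x $ (False, False, False)"

definition even_part :: "mv \<Rightarrow> mv" where
  "even_part x = grade_part 0 x + grade_part 2 x"

definition odd_part :: "mv \<Rightarrow> mv" where
  "odd_part x = grade_part 1 x + grade_part 3 x"

definition reversion :: "mv \<Rightarrow> mv" where
  "reversion x = (\<chi> A. (-1) ^ (grade A * (grade A - 1) div 2) * x $ A)"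

definition inversion :: "mv \<Rightarrow> mv" where
  "inversion x = even_part x - odd_part x"

definition cconj :: "mv \<Rightarrow> mv" where
  "cconj x = reversion (inversion x)"

definition full_inv :: "mv \<Rightarrow> mv" where
  "full_inv x = 2 *\<^sub>R grade_part 0 x - x"

definition bullet :: "(nat \<Rightarrow> real) \<Rightarrow> mv \<Rightarrow> mv \<Rightarrow> mv" where
  "bullet lam x y =
     gprod lam (even_part x) (even_part y) + gprod lam (cconj (odd_part y)) (odd_part x)
   + gprod lam (odd_part y) (even_part x) + gprod lam (odd_part x) (cconj (even_part y))"

definition normN :: "(nat \<Rightarrow> real) \<Rightarrow> mv \<Rightarrow> real" where
  "normN lam x = scalar_part (bullet lam x (full_inv x))"

definition nondeg_quadratic_form :: "('a::real_vector \<Rightarrow> real) \<Rightarrow> bool" where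
  "nondeg_quadratic_form Q \<longleftrightarrow>
     (\<exists>B :: 'a \<Rightarrow> 'a \<Rightarrow> real. bilinear B \<and> (\<forall>x y. B x y = B y x) \<and> (\<forall>x. Q x = B x x)
        \<and> (\<forall>x. (\<forall>y. B x y = 0) \<longrightarrow> x = 0))"

definition hurwitz_algebra ::
  "('a::real_vector \<Rightarrow> 'a \<Rightarrow> 'a) \<Rightarrow> 'a \<Rightarrow> ('a \<Rightarrow> real) \<Rightarrow> bool" where
  "hurwitz_algebra m e n \<longleftrightarrow>
     bilinear m \<and> (\<forall>x. m e x = x \<and> m x e = x) \<and> nondeg_quadratic_form n
     \<and> (\<forall>x y. n (m x y) = n x * n y)"

end

theory Submission
  imports Defs
begin

text \<open>Splitting x = a + b into even and odd parts, the product x \<bullet> y is the Cayley-Dickson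
  doubling (a + b)(c + d) = (ac + ~d b) + (da + b ~c) of the even subalgebra, a possibly split
  quaternion algebra.  In the blade coordinates x_A, N is the diagonal form \<Sum>_A \<lambda>_A x_A^2,
  where \<lambda>_A is the product of the \<lambda>_i over the generators occurring in the blade A.  Hence N is
  nondegenerate as soon as every \<lambda>_i is nonzero, and N(x \<bullet> y) = N(x) N(y) is a weighted
  eight-square identity, a polynomial identity in the coordinates valid for arbitrary \<lambda>_i.\<close>

lemma bilinear_compose_linear:
  assumes "bilinear h" "linear f" "linear g"
  shows "bilinear (\<lambda>x y. h (f x) (g y))"
  using assms by (simp add: bilinear_def linear_iff)

lemma bilinear_swap: "bilinear h \<Longrightarrow> bilinear (\<lambda>x y. h y x)"
  by (simp add: bilinear_def)

lemma bilinear_add: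
  assumes "bilinear h" "bilinear k"
  shows "bilinear (\<lambda>x y. h x y + k x y)"
  using assms by (simp add: bilinear_def linear_iff algebra_simps)

lemma bilinear_structure_constants:
  fixes c :: "'n::finite \<Rightarrow> 'n \<Rightarrow> 'n \<Rightarrow> real"
  shows "bilinear (\<lambda>x y. \<chi> k. \<Sum>i\<in>UNIV. \<Sum>j\<in>UNIV. c i j k * x $ i * y $ j)"
  by (simp add: bilinear_def linear_iff vec_eq_iff algebra_simps sum.distrib sum_distrib_left)

lemma gprod_structure_constants:
  "gprod lam = (\<lambda>x y. \<chi> C. \<Sum>A\<in>UNIV. \<Sum>B\<in>UNIV.
     (if blade_xor A B = C then blade_sign A B * blade_lam lam A B else 0) * x $ A * y $ B)"
  unfolding gprod_def by (intro ext arg_cong[where f = vec_lambda] sum.cong) simp_all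

lemma bilinear_gprod: "bilinear (gprod lam)"
  unfolding gprod_structure_constants by (rule bilinear_structure_constants)

lemma linear_grade_part: "linear (grade_part k)"
  by (auto simp: linear_iff grade_part_def vec_eq_iff)

lemma linear_even_part: "linear even_part"
  unfolding even_part_def by (intro linear_compose_add linear_grade_part)

lemma linear_odd_part: "linear odd_part"
  unfolding odd_part_def by (intro linear_compose_add linear_grade_part)

lemma linear_cconj: "linear cconj"
  by (auto simp: linear_iff cconj_def reversion_def inversion_def even_part_def odd_part_def
      grade_part_def vec_eq_iff algebra_simps)

lemma bilinear_bullet: "bilinear (bullet lam)"
proof -
  have cconj_odd: "linear (\<lambda>x. cconj (odd_part x))"
    and cconj_even: "linear (\<lambda>x. cconj (even_part x))"
    using linear_compose[OF linear_odd_part linear_cconj]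
      linear_compose[OF linear_even_part linear_cconj]
    by (simp_all add: o_def)
  have "bilinear (\<lambda>x y. gprod lam (even_part x) (even_part y))"
    by (rule bilinear_compose_linear[OF bilinear_gprod linear_even_part linear_even_part])
  moreover have "bilinear (\<lambda>x y. gprod lam (cconj (odd_part y)) (odd_part x))"
    using bilinear_compose_linear[OF bilinear_gprod cconj_odd linear_odd_part]
    by (rule bilinear_swap)
  moreover have "bilinear (\<lambda>x y. gprod lam (odd_part y) (even_part x))"
    using bilinear_compose_linear[OF bilinear_gprod linear_odd_part linear_even_part]
    by (rule bilinear_swap)
  moreover have "bilinear (\<lambda>x y. gprod lam (odd_part x) (cconj (even_part y)))"
    by (rule bilinear_compose_linear[OF bilinear_gprod linear_odd_part cconj_even])
  ultimately show ?thesis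
    unfolding bullet_def by (intro bilinear_add)
qed

lemma nondeg_quadratic_form_diagonal:
  fixes w :: "'n::finite \<Rightarrow> real"
  assumes "\<And>i. w i \<noteq> 0"
  shows "nondeg_quadratic_form (\<lambda>x :: real ^ 'n. \<Sum>i\<in>UNIV. w i * (x $ i)\<^sup>2)"
  unfolding nondeg_quadratic_form_def
proof (intro exI[of _ "\<lambda>x y. \<Sum>i\<in>UNIV. w i * x $ i * y $ i"] conjI allI impI)
  show "bilinear (\<lambda>x y :: real ^ 'n. \<Sum>i\<in>UNIV. w i * x $ i * y $ i)"
    by (simp add: bilinear_def linear_iff algebra_simps sum.distrib sum_distrib_left)
next
  fix x :: "real ^ 'n"
  assume orth: "\<forall>y. (\<Sum>i\<in>UNIV. w i * x $ i * y $ i) = 0"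
  have "w i * x $ i = 0" for i
    using orth[rule_format, of "axis i 1"] by (simp add: axis_def if_distrib cong: if_cong)
  then show "x = 0"
    using assms by (simp add: vec_eq_iff)
qed (simp_all add: mult.commute mult.left_commute power2_eq_square)

text \<open>Blade coordinates, with the blade (a, b, c) read as the binary number abc:
  x0, x1, ..., x7 are the coefficients of 1, e_3, e_2, e_2 e_3, e_1, e_1 e_3, e_1 e_2, e_1 e_2 e_3.\<close>

definition mvec :: "real \<Rightarrow> real \<Rightarrow> real \<Rightarrow> real \<Rightarrow> real \<Rightarrow> real \<Rightarrow> real \<Rightarrow> real \<Rightarrow> mv" where
  "mvec x0 x1 x2 x3 x4 x5 x6 x7 = (\<chi> A. case A of (a, b, c) \<Rightarrow>
     (if a then (if b then (if c then x7 else x6) else (if c then x5 else x4))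
      else (if b then (if c then x3 else x2) else (if c then x1 else x0))))"

lemma sum_blade: "(\<Sum>A\<in>UNIV. f A) = f (False,False,False) + f (False,False,True)
  + f (False,True,False) + f (False,True,True) + f (True,False,False) + f (True,False,True)
  + f (True,True,False) + f (True,True,True)"
proof -
  have univ: "(UNIV :: blade set) = {(False,False,False),(False,False,True),(False,True,False),
    (False,True,True),(True,False,False),(True,False,True),(True,True,False),(True,True,True)}"
    by (auto simp: UNIV_bool)
  show ?thesis unfolding univ by (simp add: add.assoc)
qed

lemma all_blade: "(\<forall>A :: blade. P A) \<longleftrightarrow> P (False,False,False) \<and> P (False,False,True)
  \<and> P (False,True,False) \<and> P (False,True,True) \<and> P (True,False,False) \<and> P (True,False,True)
  \<and> P (True,True,False) \<and> P (True,True,True)"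
  by (metis (full_types) prod_cases3)

lemma mvec_eq_iff: "mvec x0 x1 x2 x3 x4 x5 x6 x7 = mvec y0 y1 y2 y3 y4 y5 y6 y7 \<longleftrightarrow>
  x0 = y0 \<and> x1 = y1 \<and> x2 = y2 \<and> x3 = y3 \<and> x4 = y4 \<and> x5 = y5 \<and> x6 = y6 \<and> x7 = y7"
  unfolding vec_eq_iff all_blade by (simp add: mvec_def)

lemma mvec_induct:
  assumes "\<And>x0 x1 x2 x3 x4 x5 x6 x7. P (mvec x0 x1 x2 x3 x4 x5 x6 x7)"
  shows "P x"
proof -
  have "x = mvec (x $ (False,False,False)) (x $ (False,False,True)) (x $ (False,True,False))
    (x $ (False,True,True)) (x $ (True,False,False)) (x $ (True,False,True))
    (x $ (True,True,False)) (x $ (True,True,True))"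
    unfolding vec_eq_iff all_blade by (simp add: mvec_def)
  then show ?thesis
    by (metis assms)
qed

lemma scaleR_mvec:
  "c *\<^sub>R mvec x0 x1 x2 x3 x4 x5 x6 x7 =
    mvec (c * x0) (c * x1) (c * x2) (c * x3) (c * x4) (c * x5) (c * x6) (c * x7)"
  unfolding vec_eq_iff all_blade by (simp add: mvec_def)

lemma mv_one_mvec: "mv_one = mvec 1 0 0 0 0 0 0 0"
  unfolding vec_eq_iff all_blade by (simp add: mvec_def mv_one_def)

lemma full_inv_mvec:
  "full_inv (mvec x0 x1 x2 x3 x4 x5 x6 x7) = mvec x0 (-x1) (-x2) (-x3) (-x4) (-x5) (-x6) (-x7)"
  unfolding vec_eq_iff all_blade by (simp add: mvec_def full_inv_def grade_part_def grade_def)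

lemma even_part_mvec: "even_part (mvec x0 x1 x2 x3 x4 x5 x6 x7) = mvec x0 0 0 x3 0 x5 x6 0"
  unfolding vec_eq_iff all_blade by (simp add: mvec_def even_part_def grade_part_def grade_def)

lemma odd_part_mvec: "odd_part (mvec x0 x1 x2 x3 x4 x5 x6 x7) = mvec 0 x1 x2 0 x4 0 0 x7"
  unfolding vec_eq_iff all_blade by (simp add: mvec_def odd_part_def grade_part_def grade_def)

lemma cconj_mvec:
  "cconj (mvec x0 x1 x2 x3 x4 x5 x6 x7) = mvec x0 (-x1) (-x2) (-x3) (-x4) (-x5) (-x6) x7"
  unfolding vec_eq_iff all_blade by (simp add: mvec_def cconj_def reversion_def inversion_def
      even_part_def odd_part_def grade_part_def grade_def)

lemma gprod_mvec:
  "gprod lam (mvec x0 x1 x2 x3 x4 x5 x6 x7) (mvec y0 y1 y2 y3 y4 y5 y6 y7) =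
   mvec
    (x0 * y0 + lam 3 * x1 * y1 + lam 2 * x2 * y2 - lam 2 * lam 3 * x3 * y3 + lam 1 * x4 * y4
      - lam 1 * lam 3 * x5 * y5 - lam 1 * lam 2 * x6 * y6 - lam 1 * lam 2 * lam 3 * x7 * y7)
    (x0 * y1 + x1 * y0 + lam 2 * x2 * y3 - lam 2 * x3 * y2 + lam 1 * x4 * y5 - lam 1 * x5 * y4
      - lam 1 * lam 2 * x6 * y7 - lam 1 * lam 2 * x7 * y6)
    (x0 * y2 - lam 3 * x1 * y3 + x2 * y0 + lam 3 * x3 * y1 + lam 1 * x4 * y6
      + lam 1 * lam 3 * x5 * y7 - lam 1 * x6 * y4 + lam 1 * lam 3 * x7 * y5)
    (x0 * y3 - x1 * y2 + x2 * y1 + x3 * y0 + lam 1 * x4 * y7 + lam 1 * x5 * y6 - lam 1 * x6 * y5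
      + lam 1 * x7 * y4)
    (x0 * y4 - lam 3 * x1 * y5 - lam 2 * x2 * y6 - lam 2 * lam 3 * x3 * y7 + x4 * y0
      + lam 3 * x5 * y1 + lam 2 * x6 * y2 - lam 2 * lam 3 * x7 * y3)
    (x0 * y5 - x1 * y4 - lam 2 * x2 * y7 - lam 2 * x3 * y6 + x4 * y1 + x5 * y0 + lam 2 * x6 * y3
      - lam 2 * x7 * y2)
    (x0 * y6 + lam 3 * x1 * y7 - x2 * y4 + lam 3 * x3 * y5 + x4 * y2 - lam 3 * x5 * y3 + x6 * y0
      + lam 3 * x7 * y1)
    (x0 * y7 + x1 * y6 - x2 * y5 + x3 * y4 + x4 * y3 - x5 * y2 + x6 * y1 + x7 * y0)"
  unfolding vec_eq_iff all_blade gprod_def vec_lambda_beta sum_blade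
  by (simp add: mvec_def blade_xor_def blade_sign_def blade_lam_def algebra_simps)

lemma bullet_mvec:
  "bullet lam (mvec x0 x1 x2 x3 x4 x5 x6 x7) (mvec y0 y1 y2 y3 y4 y5 y6 y7) =
   mvec
    (x0 * y0 - lam 3 * x1 * y1 - lam 2 * x2 * y2 - lam 2 * lam 3 * x3 * y3 - lam 1 * x4 * y4
      - lam 1 * lam 3 * x5 * y5 - lam 1 * lam 2 * x6 * y6 - lam 1 * lam 2 * lam 3 * x7 * y7)
    (x0 * y1 + x1 * y0 - lam 2 * x2 * y3 + lam 2 * x3 * y2 - lam 1 * x4 * y5 + lam 1 * x5 * y4
      - lam 1 * lam 2 * x6 * y7 + lam 1 * lam 2 * x7 * y6)
    (x0 * y2 + lam 3 * x1 * y3 + x2 * y0 - lam 3 * x3 * y1 - lam 1 * x4 * y6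
      + lam 1 * lam 3 * x5 * y7 + lam 1 * x6 * y4 - lam 1 * lam 3 * x7 * y5)
    (x0 * y3 - x1 * y2 + x2 * y1 + x3 * y0 + lam 1 * x4 * y7 + lam 1 * x5 * y6 - lam 1 * x6 * y5
      - lam 1 * x7 * y4)
    (x0 * y4 + lam 3 * x1 * y5 + lam 2 * x2 * y6 - lam 2 * lam 3 * x3 * y7 + x4 * y0
      - lam 3 * x5 * y1 - lam 2 * x6 * y2 + lam 2 * lam 3 * x7 * y3)
    (x0 * y5 - x1 * y4 - lam 2 * x2 * y7 - lam 2 * x3 * y6 + x4 * y1 + x5 * y0 + lam 2 * x6 * y3
      + lam 2 * x7 * y2)
    (x0 * y6 + lam 3 * x1 * y7 - x2 * y4 + lam 3 * x3 * y5 + x4 * y2 - lam 3 * x5 * y3 + x6 * y0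
      - lam 3 * x7 * y1)
    (x0 * y7 - x1 * y6 + x2 * y5 + x3 * y4 - x4 * y3 - x5 * y2 + x6 * y1 + x7 * y0)"
  unfolding bullet_def even_part_mvec odd_part_mvec cconj_mvec gprod_mvec vec_eq_iff all_blade
  by (simp add: mvec_def algebra_simps)

lemma normN_mvec:
  "normN lam (mvec x0 x1 x2 x3 x4 x5 x6 x7) =
    x0\<^sup>2 + lam 3 * x1\<^sup>2 + lam 2 * x2\<^sup>2 + lam 2 * lam 3 * x3\<^sup>2 + lam 1 * x4\<^sup>2
    + lam 1 * lam 3 * x5\<^sup>2 + lam 1 * lam 2 * x6\<^sup>2 + lam 1 * lam 2 * lam 3 * x7\<^sup>2"
  unfolding normN_def full_inv_mvec bullet_mvec
  by (simp add: scalar_part_def mvec_def algebra_simps power2_eq_square)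

lemma normN_eq_sum: "normN lam x = (\<Sum>A\<in>UNIV. blade_lam lam A A * (x $ A)\<^sup>2)"
  by (induct x rule: mvec_induct)
    (simp only: normN_mvec sum_blade, simp add: mvec_def blade_lam_def)

lemma normN_bullet: "normN lam (bullet lam x y) = normN lam x * normN lam y"
  by (induct x rule: mvec_induct; induct y rule: mvec_induct)
    (simp only: bullet_mvec normN_mvec, algebra)

lemma bullet_mv_one_left: "bullet lam mv_one x = x"
  by (induct x rule: mvec_induct) (simp add: mv_one_mvec bullet_mvec mvec_eq_iff)

lemma bullet_mv_one_right: "bullet lam x mv_one = x"
  by (induct x rule: mvec_induct) (simp add: mv_one_mvec bullet_mvec mvec_eq_iff)

lemma bullet_full_inv: "bullet lam x (full_inv x) = normN lam x *\<^sub>R mv_one"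
  by (induct x rule: mvec_induct)
    (simp only: mv_one_mvec full_inv_mvec bullet_mvec normN_mvec scaleR_mvec,
     simp add: mvec_eq_iff algebra_simps power2_eq_square)

lemma nondeg_quadratic_form_normN:
  assumes "lam 1 \<noteq> 0" "lam 2 \<noteq> 0" "lam 3 \<noteq> 0"
  shows "nondeg_quadratic_form (normN lam)"
proof -
  have "blade_lam lam A A \<noteq> 0" for A
    using assms by (cases A) (simp add: blade_lam_def)
  then show ?thesis
    unfolding normN_eq_sum by (rule nondeg_quadratic_form_diagonal)
qed

theorem theorem1:
  fixes p q :: nat and lam :: "nat \<Rightarrow> real"
  assumes "p + q = 3"
    and "\<forall>i\<in>{1,2,3::nat}. lam i = 1 \<or> lam i = -1"
    and "card {i\<in>{1,2,3::nat}. lam i = 1} = p"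
  shows "(\<forall>x. bullet lam mv_one x = x \<and> bullet lam x mv_one = x)
     \<and> (\<forall>x. bullet lam x (full_inv x) = normN lam x *\<^sub>R mv_one)
     \<and> nondeg_quadratic_form (normN lam)
     \<and> (\<forall>x y. normN lam (bullet lam x y) = normN lam x * normN lam y)
     \<and> hurwitz_algebra (bullet lam) mv_one (normN lam)"
proof -
  have "lam 1 \<noteq> 0" "lam 2 \<noteq> 0" "lam 3 \<noteq> 0"
    using assms(2) by auto
  then have "nondeg_quadratic_form (normN lam)"
    by (rule nondeg_quadratic_form_normN)
  then show ?thesis
    using bullet_mv_one_left bullet_mv_one_right bullet_full_inv normN_bullet bilinear_bullet
    unfolding hurwitz_algebra_def by blast
qed

end
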